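(* For every $A\in\mathcal A$, the hypergraph $\mathcal N(A,V(A)\setminus X(A))$ is an atomic Maker-Breaker critical hypergraph.
   Context: For a predominated graph $(G,D)$ ($D\subseteq V(G)$), $\mathcal N(G,D)$ is the hypergraph with vertex set $V(G)$ and edge set $\{N_G[v]: v\in V(G)\setminus D\}$. A hypergraph $\mathcal H=(V,E)$ is Maker-Breaker critical if Maker wins the Maker-Breaker game on $\mathcal H$ (players alternately claim unclaimed vertices, Maker first; Maker wins if he claims all vertices of some edge) but Breaker wins on $(V,E\setminus\{e\})$ for every $e\in E$; it is atomic if it additionally has no isolated vertices. For a tree $T$, $S(T)$ is obtained by subdividing each edge of $T$ exactly once; $\mathcal S=\{S(T):T\text{ a tree}\}$ and $X(S(T))=V(T)$ (with $S(P_1)=P_1$, $X(P_1)=V(P_1)$). For $k\ge 2$, the $k$-odd replacement of an edge $xy$ removes $xy$ and adds $k$ internally vertex-disjoint $x,y$-paths of arbitrary odd lengths. $\mathcal A$ is the smallest family of graphs such that $\mathcal S\subseteq\mathcal A$ and, if $A\in\mathcal A$ and $A'$ is obtained from $A$ by a $k$-odd replacement ($k\ge2$) of an edge, then $A'\in\mathcal A$ with $X(A')$ the bipartition class of the bipartite graph $A'$ containing $X(A)$. *)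

theory Defs
  imports Main
begin

definition wf_graph :: "'a set \<Rightarrow> 'a set set \<Rightarrow> bool" where
  "wf_graph V E \<longleftrightarrow> finite V \<and>
     (\<forall>e\<in>E. \<exists>u v. u \<noteq> v \<and> e = {u, v} \<and> u \<in> V \<and> v \<in> V)"

definition adj_rel :: "'a set set \<Rightarrow> ('a \<times> 'a) set" where
  "adj_rel E = {(u, v). {u, v} \<in> E}"

definition connected_graph :: "'a set \<Rightarrow> 'a set set \<Rightarrow> bool" where
  "connected_graph V E \<longleftrightarrow> (\<forall>u\<in>V. \<forall>v\<in>V. (u, v) \<in> (adj_rel E)\<^sup>*)"

definition is_cycle :: "'a set set \<Rightarrow> 'a list \<Rightarrow> bool" where
  "is_cycle E cs \<longleftrightarrow> length cs \<ge> 3 \<and> distinct cs \<and>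
     (\<forall>i < length cs. {cs ! i, cs ! ((i + 1) mod length cs)} \<in> E)"

definition is_tree :: "'a set \<Rightarrow> 'a set set \<Rightarrow> bool" where
  "is_tree V E \<longleftrightarrow> wf_graph V E \<and> V \<noteq> {} \<and> connected_graph V E \<and>
     \<not> (\<exists>cs. is_cycle E cs)"

definition path_edges :: "'a list \<Rightarrow> 'a set set" where
  "path_edges p = {{p ! i, p ! (i + 1)} | i. i + 1 < length p}"

definition internal :: "'a list \<Rightarrow> 'a set" where
  "internal p = set (butlast (tl p))"

text \<open>famA V E X: the graph (V,E) belongs to \<open>\<A>\<close> and X = X(A).
  Base case: S(T) for a tree T = (VT, ET); the subdivision vertices are a set M
  disjoint from VT in bijection f with ET, and X(S(T)) = VT
  (for T = P_1 this gives S(P_1) = P_1 with X = V(P_1)).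
  Step: k-odd replacement (k >= 2) of an edge {x,y} by k distinct internally
  vertex-disjoint x,y-paths (vertex lists) of odd length with new internal vertices;
  X' is the bipartition class of the new graph containing X.\<close>

inductive famA :: "'a set \<Rightarrow> 'a set set \<Rightarrow> 'a set \<Rightarrow> bool" where
  subdiv:
    "\<lbrakk> is_tree VT ET; M \<inter> VT = {}; bij_betw f ET M \<rbrakk> \<Longrightarrow>
     famA (VT \<union> M) {{x, f e} | x e. e \<in> ET \<and> x \<in> e} VT"
| odd_replace:
    "\<lbrakk> famA V E X; {x, y} \<in> E; length Ps \<ge> 2; distinct Ps;
       \<forall>p\<in>set Ps. length p \<ge> 2 \<and> even (length p) \<and> distinct p \<and>
                   hd p = x \<and> last p = y \<and> internal p \<inter> V = {};
       \<forall>i < length Ps. \<forall>j < length Ps. i \<noteq> j \<longrightarrow> internal (Ps ! i) \<inter> internal (Ps ! j) = {};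
       V' = V \<union> (\<Union>p\<in>set Ps. set p);
       E' = (E - {{x, y}}) \<union> (\<Union>p\<in>set Ps. path_edges p);
       X \<subseteq> X'; X' \<subseteq> V'; \<forall>e\<in>E'. card (e \<inter> X') = 1 \<rbrakk>
     \<Longrightarrow> famA V' E' X'"

type_synonym 'a hypergraph = "'a set \<times> 'a set set"

definition cnbhd :: "'a set set \<Rightarrow> 'a \<Rightarrow> 'a set" where
  "cnbhd E v = insert v {u. {u, v} \<in> E}"

definition nbhd_hypergraph :: "'a set \<Rightarrow> 'a set set \<Rightarrow> 'a set \<Rightarrow> 'a hypergraph" where
  "nbhd_hypergraph V E D = (V, {cnbhd E v | v. v \<in> V - D})"

text \<open>mwin V H M B: in the position where Maker has claimed M, Breaker has claimed B,
  and it is Maker's turn, Maker has a winning strategy.\<close>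
inductive mwin :: "'a set \<Rightarrow> 'a set set \<Rightarrow> 'a set \<Rightarrow> 'a set \<Rightarrow> bool" for V H where
  win_now: "\<lbrakk> e \<in> H; e \<subseteq> M \<rbrakk> \<Longrightarrow> mwin V H M B"
| play: "\<lbrakk> v \<in> V - (M \<union> B);
          (\<exists>e\<in>H. e \<subseteq> insert v M) \<or>
          (V - (M \<union> B \<union> {v}) \<noteq> {} \<and>
           (\<forall>w \<in> V - (M \<union> B \<union> {v}). mwin V H (insert v M) (insert w B))) \<rbrakk>
        \<Longrightarrow> mwin V H M B"

definition maker_wins :: "'a hypergraph \<Rightarrow> bool" where
  "maker_wins \<H> \<longleftrightarrow> mwin (fst \<H>) (snd \<H>) {} {}"

definition mb_critical :: "'a hypergraph \<Rightarrow> bool" where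
  "mb_critical \<H> \<longleftrightarrow> maker_wins \<H> \<and>
     (\<forall>e \<in> snd \<H>. \<not> maker_wins (fst \<H>, snd \<H> - {e}))"

definition mb_atomic :: "'a hypergraph \<Rightarrow> bool" where
  "mb_atomic \<H> \<longleftrightarrow> mb_critical \<H> \<and> (\<forall>v \<in> fst \<H>. \<exists>e \<in> snd \<H>. v \<in> e)"

end

theory Submission
  imports Defs
begin

text \<open>
  Every graph of the family grows from a single vertex by two kinds of steps: a pendant step
  attaches a path x y l at a vertex x of X (this builds S(T) leaf by leaf), and an ear step puts a
  path p a b q of length three beside an edge pq or in its place (an odd x,y-path arises from the
  edge xy by repeatedly subdividing one of its edges with two new vertices). Both steps preserve
  two pairing structures. For Maker: a vertex v0 and a pairing of the other vertices such that every
  set containing v0 and meeting all pairs contains some N[x] with x in X; Maker claims v0 and then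
  answers inside the pairs. For Breaker: for every x0 in X a matching covering exactly X - {x0};
  once N[x0] is deleted, every remaining N[x] contains the matching edge at x, and Breaker answers
  inside the matching.\<close>

section \<open>Pairing strategies\<close>

definition pairing :: "'a set \<Rightarrow> 'a set set \<Rightarrow> bool" where
  "pairing V Ps \<longleftrightarrow> pairwise disjnt Ps \<and> (\<forall>P\<in>Ps. \<exists>u w. P = {u, w} \<and> u \<noteq> w \<and> u \<in> V \<and> w \<in> V)"

lemma pairwise_disjnt_insert: "pairwise disjnt Ms \<Longrightarrow> e \<inter> \<Union>Ms = {} \<Longrightarrow> pairwise disjnt (insert e Ms)"
  by (auto simp: pairwise_insert disjnt_def)

lemma pairing_subset: "pairing V Ps \<Longrightarrow> P \<in> Ps \<Longrightarrow> P \<subseteq> V"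
  unfolding pairing_def by auto

lemma pairing_partner:
  assumes "pairing V Ps" "P \<in> Ps" "v \<in> P"
  obtains t where "P = {v, t}" "t \<noteq> v"
proof -
  obtain u w where uw: "P = {u, w}" "u \<noteq> w" using assms(1,2) unfolding pairing_def by blast
  then have "v = u \<or> v = w" using assms(3) by blast
  then show thesis using that uw by (metis insert_commute)
qed

lemma pairing_unique:
  "pairing V Ps \<Longrightarrow> P \<in> Ps \<Longrightarrow> Q \<in> Ps \<Longrightarrow> v \<in> P \<Longrightarrow> v \<in> Q \<Longrightarrow> P = Q"
  unfolding pairing_def pairwise_def disjnt_def by blast

lemma pairing_not_subset_insert:
  assumes "pairing V Ps" "P \<in> Ps" "P \<inter> A = {}"
  shows "\<not> P \<subseteq> insert v A"
  using assms unfolding pairing_def by auto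

lemma mwin_play:
  assumes "v \<in> V - (M \<union> B)"
    and "V - (M \<union> B \<union> {v}) = {} \<Longrightarrow> \<exists>e\<in>H. e \<subseteq> insert v M"
    and "\<forall>w\<in>V - (M \<union> B \<union> {v}). mwin V H (insert v M) (insert w B)"
  shows "mwin V H M B"
  using assms by (intro play[OF assms(1)]) blast

lemma pairing_reply:
  assumes Ps: "pairing V Ps" and "F \<noteq> {}"
  obtains w where "w \<in> F" "\<And>P t. P \<in> Ps \<Longrightarrow> P = {v, t} \<Longrightarrow> t \<in> F \<Longrightarrow> t = w"
proof (cases "\<exists>P\<in>Ps. \<exists>t. P = {v, t} \<and> t \<in> F")
  case True
  then obtain P t where P: "P \<in> Ps" "P = {v, t}" and t: "t \<in> F" by blast
  show ?thesis
  proof (rule that[OF t])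
    fix P' t' assume "P' \<in> Ps" "P' = {v, t'}" "t' \<in> F"
    moreover have "P' = P" using pairing_unique[OF Ps] P \<open>P' \<in> Ps\<close> \<open>P' = {v, t'}\<close> by blast
    moreover have "t \<noteq> v" using pairing_not_subset_insert[OF Ps P(1), of "{}" v] P(2) by auto
    ultimately show "t' = t" using P by (auto simp: doubleton_eq_iff)
  qed
next
  case False
  then show ?thesis using that assms(2) by blast
qed

lemma breaker_pairing_invariant:
  assumes Ps: "pairing V Ps" and cover: "\<forall>e\<in>H. \<exists>P\<in>Ps. P \<subseteq> e"
  shows "mwin V H M B \<Longrightarrow> M \<inter> B = {} \<Longrightarrow> \<forall>P\<in>Ps. P \<inter> M \<noteq> {} \<longrightarrow> P \<inter> B \<noteq> {} \<Longrightarrow> False"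
proof (induction rule: mwin.induct)
  case (win_now e M B)
  obtain P where P: "P \<in> Ps" "P \<subseteq> e" using cover win_now.hyps(1) by blast
  have "P \<inter> M \<noteq> {}"
    using pairing_not_subset_insert[OF Ps P(1), of M] P(2) win_now.hyps(2) by blast
  then show ?case using win_now.prems P win_now.hyps(2) by blast
next
  case (play v M B)
  have no_pair_claimed: "\<not> P \<subseteq> insert v M" if "P \<in> Ps" for P
  proof
    assume "P \<subseteq> insert v M"
    moreover have "P \<inter> M \<noteq> {}"
      using pairing_not_subset_insert[OF Ps that] \<open>P \<subseteq> insert v M\<close> by blast
    ultimately show False using play.prems play.hyps(1) that by blast
  qed
  then have "\<not> (\<exists>e\<in>H. e \<subseteq> insert v M)" using cover by (meson subset_trans)
  then have free: "V - (M \<union> B \<union> {v}) \<noteq> {}"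
    and IH: "\<forall>w\<in>V - (M \<union> B \<union> {v}). insert v M \<inter> insert w B = {} \<longrightarrow>
       (\<forall>P\<in>Ps. P \<inter> insert v M \<noteq> {} \<longrightarrow> P \<inter> insert w B \<noteq> {}) \<longrightarrow> False"
    using play.IH by auto
  obtain w where w: "w \<in> V - (M \<union> B \<union> {v})"
    and partner: "\<And>P t. P \<in> Ps \<Longrightarrow> P = {v, t} \<Longrightarrow> t \<in> V - (M \<union> B \<union> {v}) \<Longrightarrow> t = w"
    using pairing_reply[OF Ps free, where v = v] by blast
  have "\<forall>P\<in>Ps. P \<inter> insert v M \<noteq> {} \<longrightarrow> P \<inter> insert w B \<noteq> {}"
  proof (intro ballI impI)
    fix P assume P: "P \<in> Ps" and meets: "P \<inter> insert v M \<noteq> {}"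
    show "P \<inter> insert w B \<noteq> {}"
    proof (cases "P \<inter> M = {}")
      case True
      then have "v \<in> P" using meets by blast
      then obtain t where t: "P = {v, t}" "t \<noteq> v" using pairing_partner[OF Ps P] by blast
      then have "t \<in> V" using pairing_subset[OF Ps P] by blast
      then show ?thesis using t True partner[OF P t(1)] by blast
    qed (use P play.prems in blast)
  qed
  moreover have "insert v M \<inter> insert w B = {}" using w play.prems(1) play.hyps(1) by blast
  ultimately show False using IH w by blast
qed

theorem breaker_pairing_strategy:
  assumes "pairing V Ps" and "\<forall>e\<in>H. \<exists>P\<in>Ps. P \<subseteq> e"
  shows "\<not> mwin V H {} {}"
  using breaker_pairing_invariant[OF assms] by blast

definition threatened :: "'a set \<Rightarrow> 'a set \<Rightarrow> 'a set \<Rightarrow> bool" where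
  "threatened M B P \<longleftrightarrow> P \<inter> M = {} \<and> P \<inter> B \<noteq> {}"

lemma maker_reply_keeps_invariant:
  assumes Ps: "pairing V Ps" and MB: "M \<inter> B = {}" and no_pair: "\<forall>P\<in>Ps. \<not> P \<subseteq> B"
    and P1: "P1 \<in> Ps" "\<forall>P\<in>Ps. threatened M B P \<longrightarrow> P = P1"
    and v: "v \<in> P1" "v \<notin> B" and w: "w \<notin> M" "w \<noteq> v"
  shows "\<forall>P\<in>Ps. \<not> P \<subseteq> insert w B"
    and "\<forall>P\<in>Ps. \<forall>Q\<in>Ps. threatened (insert v M) (insert w B) P \<longrightarrow>
      threatened (insert v M) (insert w B) Q \<longrightarrow> P = Q"
proof -
  show "\<forall>P\<in>Ps. \<not> P \<subseteq> insert w B"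
  proof (intro ballI notI)
    fix P assume P: "P \<in> Ps" "P \<subseteq> insert w B"
    then have "w \<in> P" using no_pair by blast
    then obtain u where u: "P = {w, u}" "u \<noteq> w" using pairing_partner[OF Ps P(1)] by blast
    then have "u \<in> B" using P(2) by blast
    then have "threatened M B P" unfolding threatened_def using u w MB by blast
    then have "P = P1" using P1(2) P(1) by blast
    then show False using v u w \<open>u \<in> B\<close> by blast
  qed
  have "w \<in> P" if P: "P \<in> Ps" "threatened (insert v M) (insert w B) P" for P
  proof (rule ccontr)
    assume "w \<notin> P"
    then have "threatened M B P" using P(2) unfolding threatened_def by blast
    then have "P = P1" using P1(2) P(1) by blast
    then show False using v(1) P(2) unfolding threatened_def by blast
  qed
  then show "\<forall>P\<in>Ps. \<forall>Q\<in>Ps. threatened (insert v M) (insert w B) P \<longrightarrow>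
      threatened (insert v M) (insert w B) Q \<longrightarrow> P = Q"
    using pairing_unique[OF Ps] by blast
qed

lemma maker_pairing_invariant:
  assumes fin: "finite V" and Ps: "pairing V Ps"
    and win: "\<forall>S. v0 \<in> S \<longrightarrow> (\<forall>P\<in>Ps. P \<inter> S \<noteq> {}) \<longrightarrow> (\<exists>e\<in>H. e \<subseteq> S)"
  shows "M \<inter> B = {} \<Longrightarrow> v0 \<in> M \<Longrightarrow> \<forall>P\<in>Ps. \<not> P \<subseteq> B \<Longrightarrow>
    \<forall>P\<in>Ps. \<forall>Q\<in>Ps. threatened M B P \<longrightarrow> threatened M B Q \<longrightarrow> P = Q \<Longrightarrow> mwin V H M B"
proof (induction "card (V - (M \<union> B))" arbitrary: M B rule: less_induct)
  case less
  show ?case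
  proof (cases "\<forall>P\<in>Ps. P \<inter> M \<noteq> {}")
    case True
    then obtain e where "e \<in> H" "e \<subseteq> M" using win[rule_format, of M] less.prems(2) by blast
    then show ?thesis by (rule win_now)
  next
    case False
    txt \<open>Maker answers the threatened pair if there is one, and otherwise enters a fresh pair.\<close>
    obtain P1 where P1: "P1 \<in> Ps" "P1 \<inter> M = {}"
      and P1_threatened: "\<forall>P\<in>Ps. threatened M B P \<longrightarrow> P = P1"
    proof (cases "\<exists>P\<in>Ps. threatened M B P")
      case True
      then obtain P where P: "P \<in> Ps" "threatened M B P" by blast
      show ?thesis
      proof (rule that[OF P(1)])
        show "P \<inter> M = {}" using P(2) unfolding threatened_def by blast
        show "\<forall>Q\<in>Ps. threatened M B Q \<longrightarrow> Q = P" using P less.prems(4) by blast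
      qed
    next
      case False
      then show ?thesis using that \<open>\<not> (\<forall>P\<in>Ps. P \<inter> M \<noteq> {})\<close> by blast
    qed
    obtain v where v: "v \<in> P1" "v \<notin> B" using less.prems(3) P1(1) by blast
    have v_free: "v \<in> V - (M \<union> B)" using v P1 pairing_subset[OF Ps P1(1)] by blast
    show ?thesis
    proof (rule mwin_play[OF v_free])
      assume no_free: "V - (M \<union> B \<union> {v}) = {}"
      have "\<forall>P\<in>Ps. P \<inter> insert v M \<noteq> {}"
      proof
        fix P assume "P \<in> Ps"
        then have "P \<subseteq> V" "\<not> P \<subseteq> B" using less.prems(3) pairing_subset[OF Ps] by auto
        with no_free show "P \<inter> insert v M \<noteq> {}" by auto
      qed
      then show "\<exists>e\<in>H. e \<subseteq> insert v M" using win[rule_format, of "insert v M"] less.prems(2) by blast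
    next
      show "\<forall>w\<in>V - (M \<union> B \<union> {v}). mwin V H (insert v M) (insert w B)"
      proof
        fix w assume w: "w \<in> V - (M \<union> B \<union> {v})"
        have smaller: "card (V - (insert v M \<union> insert w B)) < card (V - (M \<union> B))"
          using fin v_free w by (intro psubset_card_mono) auto
        have disjoint: "insert v M \<inter> insert w B = {}" and v0: "v0 \<in> insert v M"
          using v_free w less.prems(1,2) by auto
        have "w \<notin> M" "w \<noteq> v" using w by auto
        note reply = maker_reply_keeps_invariant[OF Ps less.prems(1,3) P1(1) P1_threatened v this]
        show "mwin V H (insert v M) (insert w B)" by (rule less.hyps[OF smaller disjoint v0 reply])
      qed
    qed
  qed
qed

theorem maker_pairing_strategy:
  assumes fin: "finite V" and v0: "v0 \<in> V" and Ps: "pairing V Ps"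
    and win: "\<forall>S. v0 \<in> S \<longrightarrow> (\<forall>P\<in>Ps. P \<inter> S \<noteq> {}) \<longrightarrow> (\<exists>e\<in>H. e \<subseteq> S)"
  shows "mwin V H {} {}"
proof (rule mwin_play)
  show "v0 \<in> V - ({} \<union> {})" using v0 by simp
next
  assume "V - ({} \<union> {} \<union> {v0}) = {}"
  then have "Ps = {}" using pairing_not_subset_insert[OF Ps, of _ "{}" v0] pairing_subset[OF Ps] by blast
  then show "\<exists>e\<in>H. e \<subseteq> insert v0 {}" using win[rule_format, of "{v0}"] by blast
next
  show "\<forall>w\<in>V - ({} \<union> {} \<union> {v0}). mwin V H (insert v0 {}) (insert w {})"
  proof
    fix w assume w: "w \<in> V - ({} \<union> {} \<union> {v0})"
    have "\<forall>P\<in>Ps. \<not> P \<subseteq> {w}" using pairing_not_subset_insert[OF Ps, of _ "{}" w] by blast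
    moreover have "\<forall>P\<in>Ps. \<forall>Q\<in>Ps. threatened {v0} {w} P \<longrightarrow> threatened {v0} {w} Q \<longrightarrow> P = Q"
      using pairing_unique[OF Ps] unfolding threatened_def by blast
    ultimately show "mwin V H (insert v0 {}) (insert w {})"
      using maker_pairing_invariant[OF fin Ps win] w by simp
  qed
qed

section \<open>Graphs grown by pendant and ear steps\<close>

definition bipartition :: "'a set \<Rightarrow> 'a set set \<Rightarrow> 'a set \<Rightarrow> bool" where
  "bipartition V E X \<longleftrightarrow> (\<forall>e\<in>E. \<exists>x y. e = {x, y} \<and> x \<in> X \<and> y \<in> V - X)"

lemma bipartition_cases:
  assumes "bipartition V E X" "{u, w} \<in> E"
  shows "u \<in> X \<and> w \<in> V - X \<or> w \<in> X \<and> u \<in> V - X"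
proof -
  obtain x y where "{u, w} = {x, y}" "x \<in> X" "y \<in> V - X"
    using assms unfolding bipartition_def by blast
  then show ?thesis by (auto simp: doubleton_eq_iff)
qed

lemma bipartition_other_side: "bipartition V E X \<Longrightarrow> {u, w} \<in> E \<Longrightarrow> u \<in> X \<Longrightarrow> w \<in> V - X"
  using bipartition_cases[of V E X u w] by blast

lemma bipartition_edge_subset:
  assumes "bipartition V E X" "X \<subseteq> V" "e \<in> E"
  shows "e \<subseteq> V"
proof -
  obtain x y where "e = {x, y}" "x \<in> X" "y \<in> V - X"
    using assms(1,3) unfolding bipartition_def by blast
  then show ?thesis using assms(2) by auto
qed

lemma bipartition_mono:
  assumes "bipartition V E X" "E' \<subseteq> E" "V \<subseteq> V'" "X \<subseteq> X'" "X' \<inter> V \<subseteq> X"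
  shows "bipartition V' E' X'"
proof (unfold bipartition_def, intro ballI)
  fix e assume "e \<in> E'"
  then obtain x y where "e = {x, y}" "x \<in> X" "y \<in> V - X"
    using assms(1,2) unfolding bipartition_def by (meson subsetD)
  then show "\<exists>x y. e = {x, y} \<and> x \<in> X' \<and> y \<in> V' - X'" using assms(3-5) by blast
qed

lemma bipartition_insert:
  assumes "bipartition V E X" and "x \<in> X \<and> y \<in> V - X \<or> y \<in> X \<and> x \<in> V - X"
  shows "bipartition V (insert {x, y} E) X"
proof -
  have "\<exists>u w. {x, y} = {u, w} \<and> u \<in> X \<and> w \<in> V - X"
    using assms(2) by (metis insert_commute)
  then show ?thesis using assms(1) unfolding bipartition_def by blast
qed

text \<open>In an ear step E0 is E or E - {pq}: the new path p a b q runs beside pq or replaces it.\<close>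
inductive grown :: "'a set \<Rightarrow> 'a set set \<Rightarrow> 'a set \<Rightarrow> bool" where
  single: "grown {v} {} {v}"
| pendant: "grown V E X \<Longrightarrow> x \<in> X \<Longrightarrow> l \<notin> V \<Longrightarrow> y \<notin> V \<Longrightarrow> l \<noteq> y \<Longrightarrow>
    grown (insert l (insert y V)) (insert {x, y} (insert {y, l} E)) (insert l X)"
| ear: "grown V E X \<Longrightarrow> {p, q} \<in> E \<Longrightarrow> p \<in> X \<Longrightarrow> a \<notin> V \<Longrightarrow> b \<notin> V \<Longrightarrow> a \<noteq> b \<Longrightarrow>
    E - {{p, q}} \<subseteq> E0 \<Longrightarrow> E0 \<subseteq> E \<Longrightarrow>
    grown (insert a (insert b V)) (insert {p, a} (insert {a, b} (insert {b, q} E0))) (insert b X)"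

lemma grown_bipartite:
  "grown V E X \<Longrightarrow> finite V \<and> X \<subseteq> V \<and> bipartition V E X"
proof (induction rule: grown.induct)
  case (single v)
  then show ?case unfolding bipartition_def by simp
next
  case (pendant V E X x l y)
  then have XV: "X \<subseteq> V" and bip: "bipartition V E X" by auto
  have "bipartition (insert l (insert y V)) E (insert l X)"
    by (rule bipartition_mono[OF bip]) (use pendant.hyps(3) in auto)
  then have "bipartition (insert l (insert y V)) (insert {x, y} (insert {y, l} E)) (insert l X)"
    using pendant.hyps XV by (intro bipartition_insert) auto
  then show ?case using pendant.IH XV by auto
next
  case (ear V E X p q a b E0)
  then have XV: "X \<subseteq> V" and bip: "bipartition V E X" by auto
  have q: "q \<in> V - X" using bipartition_other_side[OF bip ear.hyps(2,3)] .
  have "bipartition (insert a (insert b V)) E0 (insert b X)"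
    by (rule bipartition_mono[OF bip ear.hyps(8)]) (use ear.hyps(5) in auto)
  then have "bipartition (insert a (insert b V)) (insert {p, a} (insert {a, b} (insert {b, q} E0)))
      (insert b X)"
    using ear.hyps q XV by (intro bipartition_insert) auto
  then show ?case using ear.IH XV by auto
qed

lemma grown_finite: "grown V E X \<Longrightarrow> finite V"
  and grown_subset: "grown V E X \<Longrightarrow> X \<subseteq> V"
  and grown_bipartition: "grown V E X \<Longrightarrow> bipartition V E X"
  using grown_bipartite by blast+

lemma grown_dominating: "grown V E X \<Longrightarrow> v \<in> V - X \<Longrightarrow> \<exists>x\<in>X. {x, v} \<in> E"
proof (induction arbitrary: v rule: grown.induct)
  case (pendant V E X x l y)
  show ?case
  proof (cases "v = y")
    case True
    then show ?thesis using pendant.hyps(2) by (intro bexI[of _ x]) auto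
  next
    case False
    then have "v \<in> V - X" using pendant.prems by blast
    then obtain z where "z \<in> X" "{z, v} \<in> E" using pendant.IH by blast
    then show ?thesis by blast
  qed
next
  case (ear V E X p q a b E0)
  have q: "q \<in> V - X"
    using bipartition_other_side[OF grown_bipartition[OF ear.hyps(1)] ear.hyps(2,3)] .
  show ?case
  proof (cases "v \<in> V")
    case True
    then have "v \<in> V - X" using ear.prems by blast
    then obtain z where z: "z \<in> X" "{z, v} \<in> E" using ear.IH by blast
    show ?thesis
    proof (cases "{z, v} = {p, q}")
      case True
      then have "v = q" using z(1) ear.prems q ear.hyps(3) by (auto simp: doubleton_eq_iff)
      then show ?thesis by blast
    next
      case False
      then have "{z, v} \<in> E0" using z(2) ear.hyps(7) by blast
      then show ?thesis using z(1) by (intro bexI[of _ z]) auto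
    qed
  qed (use ear.prems ear.hyps(3) in blast)
qed simp

lemma grown_edge_subset: "grown V E X \<Longrightarrow> e \<in> E \<Longrightarrow> e \<subseteq> V"
  using bipartition_edge_subset grown_bipartition grown_subset by blast

lemma pairing_insert:
  assumes Ps: "pairing V Ps" and "V \<subseteq> V'" "u \<noteq> w" "u \<in> V'" "w \<in> V'" "{u, w} \<inter> \<Union>Ps = {}"
  shows "pairing V' (insert {u, w} Ps)"
proof -
  have "pairwise disjnt (insert {u, w} Ps)"
    using Ps assms(6) unfolding pairing_def by (blast intro: pairwise_disjnt_insert)
  moreover have "\<exists>c d. P = {c, d} \<and> c \<noteq> d \<and> c \<in> V' \<and> d \<in> V'" if "P \<in> insert {u, w} Ps" for P
  proof (cases "P = {u, w}")
    case True
    then show ?thesis using assms(3-5) by (intro exI[of _ u] exI[of _ w]) auto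
  next
    case False
    then have "P \<in> Ps" using that by simp
    then obtain c d where "P = {c, d}" "c \<noteq> d" "c \<in> V" "d \<in> V"
      using Ps unfolding pairing_def by blast
    then show ?thesis using assms(2) by blast
  qed
  ultimately show ?thesis unfolding pairing_def by blast
qed

lemma pairing_subset_pairs: "pairing V Ps \<Longrightarrow> Qs \<subseteq> Ps \<Longrightarrow> pairing V Qs"
  unfolding pairing_def by (meson pairwise_subset subsetD)

lemma cnbhd_bipartition:
  "bipartition V E X \<Longrightarrow> x \<in> X \<Longrightarrow> z \<in> X \<Longrightarrow> z \<noteq> x \<Longrightarrow> z \<notin> cnbhd E x"
  unfolding cnbhd_def using bipartition_other_side by fastforce

text \<open>
  Maker claims v0 and then answers each Breaker move inside the pairs Ps. The conditions that v0
  avoids X and that no pair is an edge are only needed to preserve the certificate under ear steps.\<close>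
definition maker_certificate :: "'a set \<Rightarrow> 'a set set \<Rightarrow> 'a set \<Rightarrow> 'a \<Rightarrow> 'a set set \<Rightarrow> bool" where
  "maker_certificate V E X v0 Ps \<longleftrightarrow> v0 \<in> V \<and> (v0 \<in> X \<longrightarrow> E = {}) \<and> pairing V Ps \<and>
     \<Union>Ps = V - {v0} \<and> (\<forall>P\<in>Ps. P \<notin> E) \<and>
     (\<forall>S. v0 \<in> S \<longrightarrow> (\<forall>P\<in>Ps. P \<inter> S \<noteq> {}) \<longrightarrow> (\<exists>x\<in>X. cnbhd E x \<subseteq> S))"

lemma certificate_single: "maker_certificate {v} {} {v} v {}"
  unfolding maker_certificate_def pairing_def cnbhd_def by auto

lemma certificate_pendant:
  assumes cert: "maker_certificate V E X v0 Ps"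
    and XV: "X \<subseteq> V" and EV: "\<forall>e\<in>E. e \<subseteq> V" and x: "x \<in> X"
    and l: "l \<notin> V" and y: "y \<notin> V" and ly: "l \<noteq> y"
  shows "maker_certificate (insert l (insert y V)) (insert {x, y} (insert {y, l} E)) (insert l X) y
    (insert {l, v0} Ps)"
proof -
  from cert have v0: "v0 \<in> V" and Ps: "pairing V Ps" and cover: "\<Union>Ps = V - {v0}"
    and no_edge: "\<forall>P\<in>Ps. P \<notin> E"
    and win: "\<forall>S. v0 \<in> S \<longrightarrow> (\<forall>P\<in>Ps. P \<inter> S \<noteq> {}) \<longrightarrow> (\<exists>x\<in>X. cnbhd E x \<subseteq> S)"
    unfolding maker_certificate_def by auto
  let ?V = "insert l (insert y V)" and ?E = "insert {x, y} (insert {y, l} E)"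
    and ?X = "insert l X" and ?Ps = "insert {l, v0} Ps"
  have "pairing ?V ?Ps" by (rule pairing_insert[OF Ps]) (use v0 l cover in auto)
  moreover have "\<Union>?Ps = ?V - {y}" using cover v0 l y ly by auto
  moreover have "P \<notin> ?E" if "P \<in> ?Ps" for P
  proof -
    have "P \<subseteq> insert l V" "P \<notin> E"
      using that v0 pairing_subset[OF Ps] no_edge l EV by auto
    then show ?thesis using y ly by auto
  qed
  moreover have "\<exists>z\<in>?X. cnbhd ?E z \<subseteq> S" if yS: "y \<in> S" and meets: "\<forall>P\<in>?Ps. P \<inter> S \<noteq> {}" for S
  proof (cases "l \<in> S")
    case True
    have "cnbhd ?E l = {l, y}" using l ly EV x XV unfolding cnbhd_def by (auto simp: doubleton_eq_iff)
    then show ?thesis using True yS by auto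
  next
    case False
    then have "v0 \<in> S" using meets by auto
    then obtain z where z: "z \<in> X" "cnbhd E z \<subseteq> S" using win meets by auto
    have "cnbhd ?E z \<subseteq> insert y (cnbhd E z)"
      using z(1) XV l y unfolding cnbhd_def by (auto simp: doubleton_eq_iff)
    then show ?thesis using z yS by blast
  qed
  ultimately show ?thesis using y ly XV unfolding maker_certificate_def by auto
qed

lemma cnbhd_ear:
  assumes XV: "X \<subseteq> V" and bip: "bipartition V E X" and pq: "{p, q} \<in> E" "p \<in> X"
    and new: "a \<notin> V" "b \<notin> V" "a \<noteq> b" and E0: "E - {{p, q}} \<subseteq> E0" "E0 \<subseteq> E"
  defines "E' \<equiv> insert {p, a} (insert {a, b} (insert {b, q} E0))"
  shows "z \<in> X \<Longrightarrow> z \<noteq> p \<Longrightarrow> cnbhd E' z = cnbhd E z"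
    and "cnbhd E' b = {b, a, q}"
    and "cnbhd E' p \<subseteq> insert a (cnbhd E p)"
proof -
  have q: "q \<in> V - X" using bipartition_other_side[OF bip pq] .
  have EV: "e \<subseteq> V" if "e \<in> E" for e using bipartition_edge_subset[OF bip XV that] .
  show "z \<in> X \<Longrightarrow> z \<noteq> p \<Longrightarrow> cnbhd E' z = cnbhd E z"
    using XV new q E0 unfolding E'_def cnbhd_def by (auto simp: doubleton_eq_iff)
  show "cnbhd E' b = {b, a, q}"
    using new EV E0(2) XV pq(2) unfolding E'_def cnbhd_def by (auto simp: doubleton_eq_iff)
  show "cnbhd E' p \<subseteq> insert a (cnbhd E p)"
    using E0(2) new XV pq(2) q unfolding E'_def cnbhd_def by (auto simp: doubleton_eq_iff)
qed

lemma certificate_ear_win: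
  assumes win: "\<forall>S. v0 \<in> S \<longrightarrow> (\<forall>P\<in>Ps. P \<inter> S \<noteq> {}) \<longrightarrow> (\<exists>x\<in>X. cnbhd E x \<subseteq> S)"
    and Ps: "pairing V Ps" and r: "{p, r} \<in> Ps" "r \<noteq> p" and v0: "p \<noteq> v0"
    and XV: "X \<subseteq> V" and bip: "bipartition V E X" and pq: "{p, q} \<in> E" "p \<in> X"
    and new: "a \<notin> V" "b \<notin> V" "a \<noteq> b" and E0: "E - {{p, q}} \<subseteq> E0" "E0 \<subseteq> E"
  defines "E' \<equiv> insert {p, a} (insert {a, b} (insert {b, q} E0))"
  assumes S: "v0 \<in> S" "\<forall>P\<in>insert {p, b} (insert {a, r} (Ps - {{p, r}})). P \<inter> S \<noteq> {}"
  shows "\<exists>z\<in>insert b X. cnbhd E' z \<subseteq> S"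
proof -
  have q: "q \<in> V - X" using bipartition_other_side[OF bip pq] .
  note nbhd = cnbhd_ear[OF XV bip pq new E0, folded E'_def]
  have p_in_pair: "p \<in> Q \<Longrightarrow> Q \<in> Ps \<Longrightarrow> Q = {p, r}" for Q using pairing_unique[OF Ps _ r(1)] by blast
  have old_win: "\<exists>z\<in>X. cnbhd E z \<subseteq> T"
    if "v0 \<in> T" "{p, r} \<inter> T \<noteq> {}" "\<forall>Q\<in>Ps - {{p, r}}. Q \<inter> T \<noteq> {}" for T
    using win that by blast
  have keep: "\<exists>z\<in>insert b X. cnbhd E' z \<subseteq> S" if "z \<in> X" "z \<noteq> p" "cnbhd E z \<subseteq> S" for z
    using that nbhd(1) by blast
  have pb: "{p, b} \<inter> S \<noteq> {}" and ar: "{a, r} \<inter> S \<noteq> {}"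
    and others: "\<forall>Q\<in>Ps - {{p, r}}. Q \<inter> S \<noteq> {}" using S(2) by auto
  consider "a \<in> S" "b \<in> S" "q \<in> S" | "q \<notin> S" | "q \<in> S" "p \<in> S" "r \<in> S"
    | "q \<in> S" "p \<in> S" "r \<notin> S" | "q \<in> S" "p \<notin> S" "\<not> (a \<in> S \<and> b \<in> S)" by blast
  then show ?thesis
  proof cases
    case 1
    then show ?thesis using nbhd(2) by auto
  next
    case 2
    txt \<open>Pretending that Maker also owns p, the closed neighbourhood found avoids p.\<close>
    obtain z where z: "z \<in> X" "cnbhd E z \<subseteq> insert p S"
      using old_win[of "insert p S"] S(1) others by blast
    have "q \<in> cnbhd E p" using pq unfolding cnbhd_def by (simp add: insert_commute)
    then have "z \<noteq> p" using z(2) 2 q pq(2) by blast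
    moreover have "p \<notin> cnbhd E z" using cnbhd_bipartition[OF bip z(1) pq(2)] \<open>z \<noteq> p\<close> by blast
    ultimately have "cnbhd E z \<subseteq> S" using z(2) by blast
    then show ?thesis using keep z(1) \<open>z \<noteq> p\<close> by blast
  next
    case 3
    have "Q \<inter> (S - {p}) \<noteq> {}" if "Q \<in> Ps - {{p, r}}" for Q
      using that others p_in_pair by blast
    then obtain z where z: "z \<in> X" "cnbhd E z \<subseteq> S - {p}"
      using old_win[of "S - {p}"] S(1) v0 3 r(2) by blast
    then have "z \<noteq> p" unfolding cnbhd_def by blast
    then show ?thesis using keep z by blast
  next
    case 4
    obtain z where z: "z \<in> X" "cnbhd E z \<subseteq> S" using old_win[of S] S(1) 4 others by blast
    show ?thesis
    proof (cases "z = p")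
      case True
      have "a \<in> S" using ar 4 by blast
      then show ?thesis using nbhd(3) z True by blast
    qed (use keep z in blast)
  next
    case 5
    then have "r \<in> S" using pb ar by blast
    then obtain z where z: "z \<in> X" "cnbhd E z \<subseteq> S" using old_win[of S] S(1) others by blast
    then have "z \<noteq> p" using 5 unfolding cnbhd_def by blast
    then show ?thesis using keep z by blast
  qed
qed

lemma certificate_ear:
  assumes cert: "maker_certificate V E X v0 Ps"
    and XV: "X \<subseteq> V" and bip: "bipartition V E X" and pq: "{p, q} \<in> E" "p \<in> X"
    and new: "a \<notin> V" "b \<notin> V" "a \<noteq> b" and E0: "E - {{p, q}} \<subseteq> E0" "E0 \<subseteq> E"
  obtains Ps' where "maker_certificate (insert a (insert b V))
    (insert {p, a} (insert {a, b} (insert {b, q} E0))) (insert b X) v0 Ps'"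
proof -
  from cert have v0: "v0 \<in> V" "v0 \<notin> X" and Ps: "pairing V Ps" and cover: "\<Union>Ps = V - {v0}"
    and no_edge: "\<forall>P\<in>Ps. P \<notin> E"
    and win: "\<forall>S. v0 \<in> S \<longrightarrow> (\<forall>P\<in>Ps. P \<inter> S \<noteq> {}) \<longrightarrow> (\<exists>x\<in>X. cnbhd E x \<subseteq> S)"
    using pq unfolding maker_certificate_def by auto
  have q: "q \<in> V - X" using bipartition_other_side[OF bip pq] .
  have EV: "e \<subseteq> V" if "e \<in> E" for e using bipartition_edge_subset[OF bip XV that] .
  have p: "p \<in> V" "p \<noteq> v0" using pq(2) XV v0(2) by auto
  then obtain P where P: "P \<in> Ps" "p \<in> P" using cover by blast
  then obtain r where r: "{p, r} \<in> Ps" "r \<noteq> p" using pairing_partner[OF Ps] by metis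
  have rV: "r \<in> V" "r \<noteq> v0" using r(1) pairing_subset[OF Ps] cover by auto
  have "r \<noteq> q" using r(1) no_edge pq(1) by blast
  let ?V = "insert a (insert b V)" and ?E = "insert {p, a} (insert {a, b} (insert {b, q} E0))"
    and ?X = "insert b X" and ?Ps = "insert {p, b} (insert {a, r} (Ps - {{p, r}}))"
  have old_pair: "Q \<subseteq> V - {p, r}" if "Q \<in> Ps - {{p, r}}" for Q
    using that pairing_subset[OF Ps] pairing_unique[OF Ps _ r(1)] by blast
  have "pairing ?V ?Ps"
  proof (rule pairing_insert)
    show "pairing ?V (insert {a, r} (Ps - {{p, r}}))"
      by (rule pairing_insert[OF pairing_subset_pairs[OF Ps]]) (use new rV old_pair in auto)
  qed (use new p rV r(2) old_pair in auto)
  moreover have "\<Union>?Ps = ?V - {v0}"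
  proof -
    have "\<Union>(Ps - {{p, r}}) = \<Union>Ps - {p, r}" using old_pair r(1) by blast
    then show ?thesis using cover p rV new v0 by auto
  qed
  moreover have "P \<notin> ?E" if "P \<in> ?Ps" for P
  proof -
    have "P \<noteq> {p, a}" "P \<noteq> {a, b}" "P \<noteq> {b, q}"
      using that new p rV r(2) q pq(2) \<open>r \<noteq> q\<close> old_pair by (auto simp: doubleton_eq_iff)
    moreover have "P \<notin> E" using that no_edge EV new by auto
    ultimately show ?thesis using E0(2) by auto
  qed
  moreover have "\<exists>z\<in>?X. cnbhd ?E z \<subseteq> S" if "v0 \<in> S" "\<forall>P\<in>?Ps. P \<inter> S \<noteq> {}" for S
    by (rule certificate_ear_win[OF win Ps r p(2) XV bip pq new E0 that])
  ultimately have "maker_certificate ?V ?E ?X v0 ?Ps"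
    using v0 new unfolding maker_certificate_def by auto
  then show ?thesis by (rule that)
qed

lemma grown_certificate: "grown V E X \<Longrightarrow> \<exists>v0 Ps. maker_certificate V E X v0 Ps"
proof (induction rule: grown.induct)
  case (single v)
  show ?case by (intro exI) (rule certificate_single)
next
  case (pendant V E X x l y)
  then obtain v0 Ps where "maker_certificate V E X v0 Ps" by blast
  then show ?case
    using certificate_pendant[OF _ grown_subset[OF pendant.hyps(1)] _ pendant.hyps(2-5)]
      grown_edge_subset[OF pendant.hyps(1)] by blast
next
  case (ear V E X p q a b E0)
  then obtain v0 Ps where "maker_certificate V E X v0 Ps" by blast
  then show ?case
    by (rule certificate_ear[OF _ grown_subset[OF ear.hyps(1)] grown_bipartition[OF ear.hyps(1)]
          ear.hyps(2-8)]) blast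
qed

lemma matching_reroute:
  assumes Ms: "pairwise disjnt Ms" "{p, q} \<in> Ms" "\<Union>Ms \<subseteq> V"
    and new: "a \<notin> V" "b \<notin> V" "a \<noteq> b" and "p \<noteq> q"
  shows "pairwise disjnt (insert {p, a} (insert {b, q} (Ms - {{p, q}})))"
    and "\<Union>(insert {p, a} (insert {b, q} (Ms - {{p, q}}))) = \<Union>Ms \<union> {a, b}"
proof -
  have "M \<inter> {p, q} = {}" if "M \<in> Ms - {{p, q}}" for M
    using pairwiseD[OF Ms(1), of M "{p, q}"] that Ms(2) unfolding disjnt_def by blast
  then have rest: "\<Union>(Ms - {{p, q}}) \<inter> {p, q} = {}" by blast
  have "pairwise disjnt (Ms - {{p, q}})" using Ms(1) by (rule pairwise_subset) blast
  then have "pairwise disjnt (insert {b, q} (Ms - {{p, q}}))"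
    by (rule pairwise_disjnt_insert) (use rest Ms(3) new(2) in blast)
  then show "pairwise disjnt (insert {p, a} (insert {b, q} (Ms - {{p, q}})))"
    by (rule pairwise_disjnt_insert) (use rest Ms(2,3) new \<open>p \<noteq> q\<close> in auto)
  show "\<Union>(insert {p, a} (insert {b, q} (Ms - {{p, q}}))) = \<Union>Ms \<union> {a, b}" using Ms(2) by blast
qed

lemma matching_after_ear:
  assumes G: "grown V E X" and pq: "{p, q} \<in> E" "p \<in> X" and new: "a \<notin> V" "b \<notin> V" "a \<noteq> b"
    and E0: "E - {{p, q}} \<subseteq> E0" "E0 \<subseteq> E"
    and IH: "\<And>x. x \<in> X \<Longrightarrow> \<exists>Ms\<subseteq>E. pairwise disjnt Ms \<and> \<Union>Ms \<inter> X = X - {x}"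
    and x0: "x0 \<in> insert b X"
  shows "\<exists>Ms\<subseteq>insert {p, a} (insert {a, b} (insert {b, q} E0)).
    pairwise disjnt Ms \<and> \<Union>Ms \<inter> insert b X = insert b X - {x0}"
proof -
  have XV: "X \<subseteq> V" and EV: "\<And>e. e \<in> E \<Longrightarrow> e \<subseteq> V"
    using grown_subset[OF G] grown_edge_subset[OF G] by auto
  have q: "q \<in> V - X" using bipartition_other_side[OF grown_bipartition[OF G] pq] .
  show ?thesis
  proof (cases "x0 = b")
    case True
    obtain Ms where Ms: "Ms \<subseteq> E" "pairwise disjnt Ms" "\<Union>Ms \<inter> X = X - {p}" using IH[OF pq(2)] by blast
    have "\<Union>Ms \<subseteq> V" using Ms(1) EV by blast
    moreover have "Ms \<subseteq> E0" using Ms(1,3) pq(2) E0(1) by blast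
    ultimately show ?thesis
      using Ms True pq(2) new XV by (intro exI[of _ "insert {p, a} Ms"]) (auto intro!: pairwise_disjnt_insert)
  next
    case False
    then have "x0 \<in> X" using x0 by blast
    then obtain Ms where Ms: "Ms \<subseteq> E" "pairwise disjnt Ms" "\<Union>Ms \<inter> X = X - {x0}"
      using IH[OF \<open>x0 \<in> X\<close>] by blast
    have MsV: "\<Union>Ms \<subseteq> V" using Ms(1) EV by blast
    show ?thesis
    proof (cases "{p, q} \<in> Ms - E0")
      case True
      txt \<open>The deleted edge pq was used: replace it by the two outer edges of the new path.\<close>
      let ?Ms = "insert {p, a} (insert {b, q} (Ms - {{p, q}}))"
      have "{p, q} \<in> Ms" "p \<noteq> q" using True pq(2) q by auto
      note reroute = matching_reroute[OF Ms(2) this(1) MsV new this(2)]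
      have "?Ms \<subseteq> insert {p, a} (insert {a, b} (insert {b, q} E0))" using Ms(1) E0(1) by blast
      moreover have "\<Union>?Ms \<inter> insert b X = insert b X - {x0}"
        using reroute(2) Ms(3) \<open>x0 \<noteq> b\<close> new(1) XV by auto
      ultimately show ?thesis using reroute(1) by blast
    next
      case False
      then have "insert {a, b} Ms \<subseteq> insert {p, a} (insert {a, b} (insert {b, q} E0))"
        using Ms(1) E0(1) by blast
      moreover have "pairwise disjnt (insert {a, b} Ms)"
        by (rule pairwise_disjnt_insert[OF Ms(2)]) (use MsV new in blast)
      moreover have "\<Union>(insert {a, b} Ms) \<inter> insert b X = insert b X - {x0}"
        using Ms(3) \<open>x0 \<noteq> b\<close> new(1) XV by auto
      ultimately show ?thesis by blast
    qed
  qed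
qed

text \<open>The matching covers exactly X - {x0}, so that x0 is still free for the next step.\<close>
lemma grown_matching:
  "grown V E X \<Longrightarrow> x0 \<in> X \<Longrightarrow> \<exists>Ms\<subseteq>E. pairwise disjnt Ms \<and> \<Union>Ms \<inter> X = X - {x0}"
proof (induction arbitrary: x0 rule: grown.induct)
  case (single v)
  show ?case by (intro exI[of _ "{}"]) (use single in auto)
next
  case (pendant V E X x l y)
  have XV: "X \<subseteq> V" and EV: "\<And>e. e \<in> E \<Longrightarrow> e \<subseteq> V"
    using grown_subset[OF pendant.hyps(1)] grown_edge_subset[OF pendant.hyps(1)] by auto
  txt \<open>The leaf l is matched to y, or, if l is the exposed vertex, y is matched to x.\<close>
  define x1 where "x1 = (if x0 = l then x else x0)"
  define e where "e = (if x0 = l then {x, y} else {y, l})"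
  have "x1 \<in> X" using pendant.hyps(2) pendant.prems unfolding x1_def by auto
  then obtain Ms where Ms: "Ms \<subseteq> E" "pairwise disjnt Ms" "\<Union>Ms \<inter> X = X - {x1}"
    using pendant.IH[OF \<open>x1 \<in> X\<close>] by blast
  have "\<Union>Ms \<subseteq> V" using Ms(1) EV by blast
  then have "insert e Ms \<subseteq> insert {x, y} (insert {y, l} E) \<and> pairwise disjnt (insert e Ms) \<and>
      \<Union>(insert e Ms) \<inter> insert l X = insert l X - {x0}"
    using Ms pendant.hyps(2-5) pendant.prems XV unfolding e_def x1_def
    by (cases "x0 = l") (auto intro!: pairwise_disjnt_insert)
  then show ?case by blast
next
  case (ear V E X p q a b E0)
  show ?case by (rule matching_after_ear[OF ear.hyps(1-8) ear.IH ear.prems])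
qed

lemma edge_subset_cnbhd: "{u, w} \<in> E \<Longrightarrow> x \<in> {u, w} \<Longrightarrow> {u, w} \<subseteq> cnbhd E x"
  unfolding cnbhd_def by (auto simp: insert_commute)

lemma bipartition_pairing:
  assumes bip: "bipartition V E X" and XV: "X \<subseteq> V" and Ms: "Ms \<subseteq> E" "pairwise disjnt Ms"
  shows "pairing V Ms"
proof -
  have "\<exists>u w. M = {u, w} \<and> u \<noteq> w \<and> u \<in> V \<and> w \<in> V" if M: "M \<in> Ms" for M
  proof -
    obtain x y where "M = {x, y}" "x \<in> X" "y \<in> V - X"
      using bip M Ms(1) unfolding bipartition_def by (meson subsetD)
    moreover have "x \<noteq> y" "x \<in> V" using calculation XV by auto
    ultimately show ?thesis by blast
  qed
  then show ?thesis using Ms(2) unfolding pairing_def by blast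
qed

lemma grown_maker_wins:
  assumes G: "grown V E X"
  shows "mwin V {cnbhd E x | x. x \<in> X} {} {}"
proof -
  obtain v0 Ps where "maker_certificate V E X v0 Ps" using grown_certificate[OF G] by blast
  then have v0: "v0 \<in> V" and Ps: "pairing V Ps"
    and win: "\<forall>S. v0 \<in> S \<longrightarrow> (\<forall>P\<in>Ps. P \<inter> S \<noteq> {}) \<longrightarrow> (\<exists>x\<in>X. cnbhd E x \<subseteq> S)"
    unfolding maker_certificate_def by auto
  have "\<forall>S. v0 \<in> S \<longrightarrow> (\<forall>P\<in>Ps. P \<inter> S \<noteq> {}) \<longrightarrow> (\<exists>e\<in>{cnbhd E x | x. x \<in> X}. e \<subseteq> S)"
  proof (intro allI impI)
    fix S assume "v0 \<in> S" "\<forall>P\<in>Ps. P \<inter> S \<noteq> {}"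
    then have "\<exists>x\<in>X. cnbhd E x \<subseteq> S" using win by blast
    then show "\<exists>e\<in>{cnbhd E x | x. x \<in> X}. e \<subseteq> S" by auto
  qed
  then show ?thesis by (rule maker_pairing_strategy[OF grown_finite[OF G] v0 Ps])
qed

lemma grown_breaker_wins:
  assumes G: "grown V E X" and x0: "x0 \<in> X"
  shows "\<not> mwin V ({cnbhd E x | x. x \<in> X} - {cnbhd E x0}) {} {}"
proof -
  have bip: "bipartition V E X" using grown_bipartition[OF G] .
  obtain Ms where Ms: "Ms \<subseteq> E" "pairwise disjnt Ms" "\<Union>Ms \<inter> X = X - {x0}"
    using grown_matching[OF G x0] by blast
  have "\<exists>M\<in>Ms. M \<subseteq> e" if e: "e \<in> {cnbhd E x | x. x \<in> X} - {cnbhd E x0}" for e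
  proof -
    obtain x where x: "x \<in> X" "e = cnbhd E x" using e by blast
    then have "x \<noteq> x0" using e by blast
    then obtain M where M: "M \<in> Ms" "x \<in> M" using Ms(3) x(1) by blast
    moreover obtain u w where uw: "M = {u, w}"
      using M(1) Ms(1) bip unfolding bipartition_def by (meson subsetD)
    ultimately have "{u, w} \<in> E" "x \<in> {u, w}" using Ms(1) by auto
    then have "M \<subseteq> e" using edge_subset_cnbhd[of u w E x] uw x(2) by simp
    then show ?thesis using M(1) by blast
  qed
  then show ?thesis
    using breaker_pairing_strategy[OF bipartition_pairing[OF bip grown_subset[OF G] Ms(1,2)]] by blast
qed

theorem grown_atomic:
  assumes G: "grown V E X"
  shows "mb_atomic (nbhd_hypergraph V E (V - X))"
proof -
  define H where "H = {cnbhd E x | x. x \<in> X}"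
  have "V - (V - X) = X" using grown_subset[OF G] by blast
  then have hyp: "nbhd_hypergraph V E (V - X) = (V, H)" unfolding nbhd_hypergraph_def H_def by simp
  have "\<not> mwin V (H - {e}) {} {}" if "e \<in> H" for e
    using that grown_breaker_wins[OF G] unfolding H_def by blast
  moreover have "\<exists>e\<in>H. v \<in> e" if v: "v \<in> V" for v
  proof (cases "v \<in> X")
    case True
    then show ?thesis unfolding H_def cnbhd_def by blast
  next
    case False
    then obtain x where x: "x \<in> X" "{x, v} \<in> E" using grown_dominating[OF G, of v] v by blast
    then have "v \<in> cnbhd E x" using edge_subset_cnbhd[of x v E x] by blast
    then show ?thesis using x(1) unfolding H_def by blast
  qed
  ultimately show ?thesis
    using grown_maker_wins[OF G] unfolding hyp mb_atomic_def mb_critical_def maker_wins_def H_def by simp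
qed

section \<open>Subdivided trees\<close>

definition graph_path :: "'a set set \<Rightarrow> 'a list \<Rightarrow> bool" where
  "graph_path E vs \<longleftrightarrow> distinct vs \<and> (\<forall>i. Suc i < length vs \<longrightarrow> {vs ! i, vs ! Suc i} \<in> E)"

lemma wf_graph_edge: "wf_graph V E \<Longrightarrow> e \<in> E \<Longrightarrow> \<exists>u v. u \<noteq> v \<and> e = {u, v} \<and> u \<in> V \<and> v \<in> V"
  unfolding wf_graph_def by blast

lemma graph_path_snoc:
  assumes "graph_path E vs" "vs \<noteq> []" "w \<notin> set vs" "{last vs, w} \<in> E"
  shows "graph_path E (vs @ [w])"
  unfolding graph_path_def
proof (intro conjI allI impI)
  show "distinct (vs @ [w])" using assms(1,3) unfolding graph_path_def by simp
  fix i assume i: "Suc i < length (vs @ [w])"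
  show "{(vs @ [w]) ! i, (vs @ [w]) ! Suc i} \<in> E"
  proof (cases "Suc i < length vs")
    case True
    then show ?thesis using assms(1) unfolding graph_path_def by (simp add: nth_append)
  next
    case False
    then have "i = length vs - 1" using i by simp
    then show ?thesis using assms(2,4) by (simp add: nth_append last_conv_nth)
  qed
qed

lemma graph_path_close_cycle:
  assumes "graph_path E vs" "i + 3 \<le> length vs" "{last vs, vs ! i} \<in> E"
  shows "is_cycle E (drop i vs)"
  unfolding is_cycle_def
proof (intro conjI allI impI)
  let ?cs = "drop i vs"
  show "3 \<le> length ?cs" "distinct ?cs" using assms(1,2) unfolding graph_path_def by auto
  fix j assume j: "j < length ?cs"
  show "{?cs ! j, ?cs ! ((j + 1) mod length ?cs)} \<in> E"
  proof (cases "j + 1 < length ?cs")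
    case True
    then show ?thesis using assms(1) unfolding graph_path_def by (simp add: add.commute)
  next
    case False
    have "vs \<noteq> []" using assms(2) by auto
    moreover have "j + 1 = length ?cs" using False j by simp
    moreover have "i + j = length vs - 1" using calculation(2) assms(2) by simp
    ultimately have "?cs ! j = last vs" "?cs ! ((j + 1) mod length ?cs) = vs ! i"
      using assms(2) by (auto simp: last_conv_nth)
    then show ?thesis using assms(3) by simp
  qed
qed

lemma maximal_path_end_is_leaf:
  assumes wf: "wf_graph V E" and acyclic: "\<not> (\<exists>cs. is_cycle E cs)"
    and path: "graph_path E vs" "set vs \<subseteq> V" "2 \<le> length vs"
    and maximal: "\<forall>ws. graph_path E ws \<and> set ws \<subseteq> V \<longrightarrow> length ws \<le> length vs"
    and e: "e \<in> E" "last vs \<in> e"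
  shows "e = {last vs, vs ! (length vs - 2)}"
proof (rule ccontr)
  let ?l = "last vs" and ?x = "vs ! (length vs - 2)"
  assume ne: "e \<noteq> {?l, ?x}"
  have vs: "vs \<noteq> []" using path(3) by auto
  obtain w where w: "e = {?l, w}" "w \<in> V"
    using wf_graph_edge[OF wf e(1)] e(2) by (metis insert_commute insertE singletonD)
  show False
  proof (cases "w \<in> set vs")
    case False
    then have "graph_path E (vs @ [w])" using graph_path_snoc[OF path(1) vs] w e(1) by auto
    then show False using maximal path(2) w(2) by fastforce
  next
    case True
    then obtain i where i: "i < length vs" "vs ! i = w" by (metis in_set_conv_nth)
    have "w \<noteq> ?l" using w e(1) wf unfolding wf_graph_def by (metis doubleton_eq_iff)
    then have "i \<noteq> length vs - 1" using i last_conv_nth[OF vs] by auto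
    moreover have "i \<noteq> length vs - 2" using i ne w(1) by auto
    ultimately have "i + 3 \<le> length vs" using i path(3) by linarith
    then show False using graph_path_close_cycle[OF path(1)] i(2) w(1) e(1) acyclic by blast
  qed
qed

lemma tree_has_leaf:
  assumes T: "is_tree VT ET" and uv: "u \<in> VT" "v \<in> VT" "u \<noteq> v"
  obtains l x where "l \<in> VT" "x \<in> VT" "l \<noteq> x" "{l, x} \<in> ET" "\<forall>e\<in>ET. l \<in> e \<longrightarrow> e = {l, x}"
proof -
  have wf: "wf_graph VT ET" and con: "connected_graph VT ET" and acyclic: "\<not> (\<exists>cs. is_cycle ET cs)"
    using T unfolding is_tree_def by auto
  have fin: "finite VT" using wf unfolding wf_graph_def by blast
  have "(u, v) \<in> (adj_rel ET)\<^sup>*" using con uv unfolding connected_graph_def by blast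
  then obtain w where "(u, w) \<in> adj_rel ET" using uv(3) by (metis converse_rtranclE)
  then have "{u, w} \<in> ET" unfolding adj_rel_def by simp
  then obtain a b where ab: "a \<noteq> b" "{a, b} \<in> ET" "a \<in> VT" "b \<in> VT"
    using wf_graph_edge[OF wf] by metis
  let ?P = "\<lambda>vs. graph_path ET vs \<and> set vs \<subseteq> VT"
  have start: "?P [a, b]" unfolding graph_path_def using ab by (auto simp: less_Suc_eq nth_Cons')
  have "length vs < card VT + 1" if "?P vs" for vs
    using that fin unfolding graph_path_def by (metis card_mono distinct_card less_Suc_eq_le Suc_eq_plus1)
  then obtain vs where vs: "?P vs" and maximal: "\<forall>ws. ?P ws \<longrightarrow> length ws \<le> length vs"
    using ex_has_greatest_nat[of ?P "[a, b]" length "card VT + 1", OF start] by blast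
  have len: "2 \<le> length vs" using maximal start by fastforce
  let ?l = "last vs" and ?x = "vs ! (length vs - 2)"
  have "vs \<noteq> []" using len by auto
  then have last: "?l = vs ! (length vs - 1)" by (simp add: last_conv_nth)
  moreover have "{vs ! (length vs - 2), vs ! Suc (length vs - 2)} \<in> ET"
    using vs len unfolding graph_path_def by simp
  moreover have "Suc (length vs - 2) = length vs - 1" using len by simp
  ultimately have edge: "{?l, ?x} \<in> ET" by (simp add: insert_commute)
  have "?l \<noteq> ?x" using vs len last unfolding graph_path_def by (simp add: nth_eq_iff_index_eq)
  moreover have "?l \<in> VT" "?x \<in> VT" using vs len \<open>vs \<noteq> []\<close> by (auto dest: nth_mem last_in_set)
  ultimately show thesis
    using that edge maximal_path_end_is_leaf[OF wf acyclic _ _ len] vs maximal by blast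
qed

lemma rtrancl_remove_leaf:
  assumes lx: "\<forall>e\<in>ET. l \<in> e \<longrightarrow> e = {l, x}" and lnx: "l \<noteq> x"
  shows "(u, v) \<in> (adj_rel ET)\<^sup>* \<Longrightarrow> u \<noteq> l \<Longrightarrow>
    (v \<noteq> l \<longrightarrow> (u, v) \<in> (adj_rel (ET - {{l, x}}))\<^sup>*) \<and> (v = l \<longrightarrow> (u, x) \<in> (adj_rel (ET - {{l, x}}))\<^sup>*)"
proof (induction rule: rtrancl_induct)
  case base
  then show ?case by simp
next
  case (step w v)
  have wv: "{w, v} \<in> ET" using step.hyps(2) unfolding adj_rel_def by simp
  show ?case
  proof (cases "w = l")
    case True
    then have ux: "(u, x) \<in> (adj_rel (ET - {{l, x}}))\<^sup>*" using step by blast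
    have "{w, v} = {l, x}" using lx[rule_format, OF wv] True by simp
    then have "v = x" using True lnx by (auto simp: doubleton_eq_iff)
    then show ?thesis using ux lnx by simp
  next
    case False
    then have uw: "(u, w) \<in> (adj_rel (ET - {{l, x}}))\<^sup>*" using step by blast
    show ?thesis
    proof (cases "v = l")
      case True
      have "{w, v} = {l, x}" using lx[rule_format, OF wv] True by simp
      then have "w = x" using True lnx False by (auto simp: doubleton_eq_iff)
      then show ?thesis using uw True by simp
    next
      case vl: False
      have "{w, v} \<noteq> {l, x}" using False vl by (auto simp: doubleton_eq_iff)
      then have "(w, v) \<in> adj_rel (ET - {{l, x}})" using wv unfolding adj_rel_def by simp
      then show ?thesis using uw vl by (meson rtrancl.rtrancl_into_rtrancl)
    qed
  qed
qed

lemma tree_remove_leaf: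
  assumes T: "is_tree VT ET" and l: "l \<in> VT" "x \<in> VT" "l \<noteq> x" "{l, x} \<in> ET"
    and lx: "\<forall>e\<in>ET. l \<in> e \<longrightarrow> e = {l, x}"
  shows "is_tree (VT - {l}) (ET - {{l, x}})"
proof -
  have wf: "wf_graph VT ET" and con: "connected_graph VT ET" and nc: "\<not> (\<exists>cs. is_cycle ET cs)"
    using T unfolding is_tree_def by auto
  have wf': "wf_graph (VT - {l}) (ET - {{l, x}})"
    unfolding wf_graph_def
  proof (intro conjI ballI)
    show "finite (VT - {l})" using wf unfolding wf_graph_def by simp
    fix e assume e: "e \<in> ET - {{l, x}}"
    then obtain c d where cd: "c \<noteq> d" "e = {c, d}" "c \<in> VT" "d \<in> VT" using wf_graph_edge[OF wf] by blast
    have "l \<notin> e" using lx e by blast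
    then show "\<exists>u v. u \<noteq> v \<and> e = {u, v} \<and> u \<in> VT - {l} \<and> v \<in> VT - {l}" using cd by blast
  qed
  have con': "connected_graph (VT - {l}) (ET - {{l, x}})"
    unfolding connected_graph_def
  proof (intro ballI)
    fix u v assume u: "u \<in> VT - {l}" and v: "v \<in> VT - {l}"
    have "(u, v) \<in> (adj_rel ET)\<^sup>*" using con u v unfolding connected_graph_def by blast
    then show "(u, v) \<in> (adj_rel (ET - {{l, x}}))\<^sup>*" using rtrancl_remove_leaf[OF lx l(3)] u v by blast
  qed
  have nc': "\<not> (\<exists>cs. is_cycle (ET - {{l, x}}) cs)"
  proof
    assume "\<exists>cs. is_cycle (ET - {{l, x}}) cs"
    then obtain cs where "is_cycle (ET - {{l, x}}) cs" by blast
    then have "is_cycle ET cs" unfolding is_cycle_def by blast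
    then show False using nc by blast
  qed
  have ne: "VT - {l} \<noteq> {}" using l by blast
  show ?thesis unfolding is_tree_def using wf' con' nc' ne by blast
qed

lemma subdivision_edges_remove_leaf:
  assumes "{l, x} \<in> ET"
  shows "{{z, f e} | z e. e \<in> ET \<and> z \<in> e} =
    insert {x, f {l, x}} (insert {f {l, x}, l} {{z, f e} | z e. e \<in> ET - {{l, x}} \<and> z \<in> e})"
  using assms by (auto simp: insert_commute)

lemma tree_grown:
  "is_tree VT ET \<Longrightarrow> M \<inter> VT = {} \<Longrightarrow> bij_betw f ET M \<Longrightarrow>
    grown (VT \<union> M) {{z, f e} | z e. e \<in> ET \<and> z \<in> e} VT"
proof (induction "card VT" arbitrary: VT ET M rule: less_induct)
  case less
  have wf: "wf_graph VT ET" and "VT \<noteq> {}" using less.prems(1) unfolding is_tree_def by auto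
  show ?case
  proof (cases "\<exists>u\<in>VT. \<exists>v\<in>VT. u \<noteq> v")
    case False
    then obtain v where VT: "VT = {v}" using \<open>VT \<noteq> {}\<close> by blast
    then have "ET = {}" using wf_graph_edge[OF wf] by blast
    moreover have "M = {}" using bij_betw_imp_surj_on[OF less.prems(3)] calculation by simp
    ultimately show ?thesis using VT grown.single by simp
  next
    case True
    then obtain l x where l: "l \<in> VT" "x \<in> VT" "l \<noteq> x" "{l, x} \<in> ET"
      and leaf: "\<forall>e\<in>ET. l \<in> e \<longrightarrow> e = {l, x}"
      using tree_has_leaf[OF less.prems(1)] by metis
    define y where "y = f {l, x}"
    have y: "y \<in> M" "y \<notin> VT" using less.prems(2,3) l(4) unfolding y_def bij_betw_def by auto
    have "bij_betw f (ET - {{l, x}}) (M - {y})"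
      using bij_betw_DiffI[OF less.prems(3), of "{{l, x}}" "{y}"] l(4) y(1) unfolding y_def
      by (simp add: bij_betw_def)
    moreover have "is_tree (VT - {l}) (ET - {{l, x}})" by (rule tree_remove_leaf[OF less.prems(1) l leaf])
    moreover have "card (VT - {l}) < card VT"
      using wf l(1) unfolding wf_graph_def by (blast intro: card_Diff1_less)
    ultimately have "grown ((VT - {l}) \<union> (M - {y})) {{z, f e} | z e. e \<in> ET - {{l, x}} \<and> z \<in> e} (VT - {l})"
      using less.hyps less.prems(2) by blast
    then have "grown (insert l (insert y ((VT - {l}) \<union> (M - {y}))))
        (insert {x, y} (insert {y, l} {{z, f e} | z e. e \<in> ET - {{l, x}} \<and> z \<in> e})) (insert l (VT - {l}))"
      by (rule grown.pendant) (use l y less.prems(2) in auto)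
    moreover have "insert l (insert y ((VT - {l}) \<union> (M - {y}))) = VT \<union> M" using l(1) y(1) by blast
    moreover have "insert l (VT - {l}) = VT" using l(1) by blast
    ultimately show ?thesis using subdivision_edges_remove_leaf[OF l(4), of f] unfolding y_def by simp
  qed
qed

section \<open>Odd replacements\<close>

lemma path_edges_single [simp]: "path_edges [a] = {}"
  unfolding path_edges_def by simp

lemma path_edges_Cons2 [simp]: "path_edges (a # b # rest) = insert {a, b} (path_edges (b # rest))"
proof
  show "path_edges (a # b # rest) \<subseteq> insert {a, b} (path_edges (b # rest))"
  proof
    fix e assume "e \<in> path_edges (a # b # rest)"
    then obtain i where i: "e = {(a # b # rest) ! i, (a # b # rest) ! (i + 1)}" "i + 1 < length (a # b # rest)"
      unfolding path_edges_def by blast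
    show "e \<in> insert {a, b} (path_edges (b # rest))"
    proof (cases i)
      case 0 then show ?thesis using i by simp
    next
      case (Suc j)
      then have "e = {(b # rest) ! j, (b # rest) ! (j + 1)}" "j + 1 < length (b # rest)" using i by auto
      then show ?thesis unfolding path_edges_def by blast
    qed
  qed
  show "insert {a, b} (path_edges (b # rest)) \<subseteq> path_edges (a # b # rest)"
  proof
    fix e assume "e \<in> insert {a, b} (path_edges (b # rest))"
    then show "e \<in> path_edges (a # b # rest)"
    proof
      assume "e = {a, b}"
      then have "e = {(a # b # rest) ! 0, (a # b # rest) ! (0 + 1)}" "0 + 1 < length (a # b # rest)" by auto
      then show ?thesis unfolding path_edges_def by blast
    next
      assume "e \<in> path_edges (b # rest)"
      then obtain j where j: "e = {(b # rest) ! j, (b # rest) ! (j + 1)}" "j + 1 < length (b # rest)"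
        unfolding path_edges_def by blast
      then have "e = {(a # b # rest) ! Suc j, (a # b # rest) ! (Suc j + 1)}" "Suc j + 1 < length (a # b # rest)" by auto
      then show ?thesis unfolding path_edges_def by blast
    qed
  qed
qed

lemma path_edges_subset: "e \<in> path_edges P \<Longrightarrow> e \<subseteq> set P"
  unfolding path_edges_def by auto

lemma card_doubleton_Int_eq_1: "u \<noteq> v \<Longrightarrow> card ({u, v} \<inter> Y) = 1 \<longleftrightarrow> (u \<in> Y \<longleftrightarrow> v \<notin> Y)"
  by (cases "u \<in> Y"; cases "v \<in> Y") (auto simp: Int_insert_left)

lemma alternating_path_ends:
  "even (length P) \<Longrightarrow> P \<noteq> [] \<Longrightarrow> distinct P \<Longrightarrow> \<forall>e\<in>path_edges P. card (e \<inter> Y) = 1 \<Longrightarrow>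
    hd P \<in> Y \<longleftrightarrow> last P \<notin> Y"
proof (induction P rule: induct_list012)
  case (3 u v rest)
  have "u \<in> Y \<longleftrightarrow> v \<notin> Y" using "3.prems"(3,4) card_doubleton_Int_eq_1[of u v Y] by simp
  show ?case
  proof (cases rest)
    case (Cons w rest')
    have "v \<in> Y \<longleftrightarrow> w \<notin> Y" using "3.prems"(3,4) Cons card_doubleton_Int_eq_1[of v w Y] by simp
    moreover have "w \<in> Y \<longleftrightarrow> last rest \<notin> Y" using "3.IH"(1) "3.prems" Cons by simp
    ultimately show ?thesis using \<open>u \<in> Y \<longleftrightarrow> v \<notin> Y\<close> Cons by simp
  qed (use \<open>u \<in> Y \<longleftrightarrow> v \<notin> Y\<close> in simp)
qed simp_all

text \<open>An odd path: the list P has an even number of vertices.\<close>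
definition fresh_odd_path :: "'a \<Rightarrow> 'a \<Rightarrow> 'a set \<Rightarrow> 'a list \<Rightarrow> bool" where
  "fresh_odd_path p q V P \<longleftrightarrow> 2 \<le> length P \<and> even (length P) \<and> distinct P \<and> hd P = p \<and> last P = q \<and>
     internal P \<inter> V = {}"

lemma set_path_ends:
  assumes "2 \<le> length P"
  shows "set P = insert (hd P) (insert (last P) (internal P))"
proof -
  obtain u xs where "P = u # xs" using assms by (cases P) auto
  then have P: "P = u # xs" "xs \<noteq> []" using assms by auto
  then have "set xs = insert (last xs) (set (butlast xs))"
    by (metis append_butlast_last_id insert_commute list.simps(15) rotate1.simps(2) set_rotate1)
  then show ?thesis using P unfolding internal_def by simp
qed

lemma grown_subdivide:
  assumes G: "grown V E X" and pq: "{p, q} \<in> E" and new: "a \<notin> V" "b \<notin> V" "a \<noteq> b"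
    and E0: "E - {{p, q}} \<subseteq> E0" "E0 \<subseteq> E"
  shows "grown (insert a (insert b V)) (insert {p, a} (insert {a, b} (insert {b, q} E0)))
    (if p \<in> X then insert b X else insert a X)"
proof (cases "p \<in> X")
  case True
  then show ?thesis using grown.ear[OF G pq True new E0] by simp
next
  case False
  then have "q \<in> X" using bipartition_cases[OF grown_bipartition[OF G] pq] by blast
  moreover have "{q, p} \<in> E" "E - {{q, p}} \<subseteq> E0" using pq E0(1) by (simp_all add: insert_commute)
  ultimately have "grown (insert b (insert a V)) (insert {q, b} (insert {b, a} (insert {a, p} E0))) (insert a X)"
    using grown.ear[OF G _ _ new(2,1) new(3)[symmetric] _ E0(2)] by blast
  then show ?thesis using False by (simp add: insert_commute)
qed

lemma ends_not_internal:
  assumes "distinct P"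
  shows "hd P \<notin> internal P" "last P \<notin> internal P"
proof -
  have "internal P \<subseteq> set (tl P)" "internal P \<subseteq> set (butlast P)"
    unfolding internal_def by (cases P; auto simp: butlast_tl dest: in_set_butlastD)+
  moreover have "hd P \<notin> set (tl P)" using assms by (cases P) auto
  moreover have "last P \<notin> set (butlast P)"
    using assms by (cases P rule: rev_cases) auto
  ultimately show "hd P \<notin> internal P" "last P \<notin> internal P" by blast+
qed

lemma grown_add_path:
  assumes G: "grown V E X" and pq: "{p, q} \<in> E"
  shows "fresh_odd_path p q V P \<Longrightarrow> E - {{p, q}} \<subseteq> E0 \<Longrightarrow> E0 \<subseteq> E \<Longrightarrow>
    X' \<inter> V = X \<Longrightarrow> X' \<subseteq> V \<union> set P \<Longrightarrow> \<forall>e\<in>path_edges P. card (e \<inter> X') = 1 \<Longrightarrow>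
    grown (V \<union> set P) (E0 \<union> path_edges P) X'"
proof (induction "length P" arbitrary: P X' E0 rule: less_induct)
  case less
  note path = less.prems(1)[unfolded fresh_odd_path_def]
  have pqV: "p \<in> V" "q \<in> V" using grown_edge_subset[OF G pq] by auto
  have "\<exists>u a rest. P = u # a # rest" using path by (auto simp: numeral_2_eq_2 Suc_le_length_iff)
  then obtain a rest where P: "P = p # a # rest" using path by auto
  show ?case
  proof (cases rest)
    case Nil
    then have "P = [p, q]" using P path by simp
    then have "V \<union> set P = V" "E0 \<union> path_edges P = E" "X' = X"
      using pqV pq less.prems(2-5) by auto
    then show ?thesis using G by simp
  next
    case (Cons b rest1)
    then obtain c rest2 where P: "P = p # a # b # c # rest2"
      using P path by (cases rest1) auto
    define P0 where "P0 = p # c # rest2"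
    define X0 where "X0 = X' - {a, b}"
    have dist: "distinct (p # a # b # c # rest2)" using path P by simp
    have ab: "a \<notin> V" "b \<notin> V" using path P unfolding internal_def by auto
    have P0: "fresh_odd_path p q V P0"
      using path P unfolding fresh_odd_path_def P0_def internal_def by (auto dest: in_set_butlastD)
    have alt: "card ({p, a} \<inter> X') = 1" "card ({a, b} \<inter> X') = 1" "card ({b, c} \<inter> X') = 1"
      and alt_rest: "\<forall>e\<in>path_edges (c # rest2). card (e \<inter> X') = 1"
      using less.prems(6) P by auto
    then have side: "a \<in> X' \<longleftrightarrow> p \<notin> X'" "b \<in> X' \<longleftrightarrow> p \<in> X'" "c \<in> X' \<longleftrightarrow> p \<notin> X'"
      using dist card_doubleton_Int_eq_1 by (metis distinct_length_2_or_more)+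
    have "grown (V \<union> set P0) (E0 \<union> path_edges P0) X0"
    proof (rule less.hyps)
      show "length P0 < length P" unfolding P0_def P by simp
      show "X0 \<inter> V = X" using less.prems(4) ab unfolding X0_def by blast
      show "X0 \<subseteq> V \<union> set P0" using less.prems(5) unfolding X0_def P0_def P by auto
      have "e \<inter> X0 = e \<inter> X'" if "e \<in> path_edges (c # rest2)" for e
        using path_edges_subset[OF that] dist unfolding X0_def by auto
      moreover have "card ({p, c} \<inter> X0) = 1"
        using side dist card_doubleton_Int_eq_1[of p c X0] unfolding X0_def by auto
      ultimately show "\<forall>e\<in>path_edges P0. card (e \<inter> X0) = 1" using alt_rest unfolding P0_def by simp
    qed (use P0 less.prems(2,3) in auto)
    then have "grown (insert a (insert b (V \<union> set P0)))
        (insert {p, a} (insert {a, b} (insert {b, c} (E0 \<union> path_edges (c # rest2)))))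
        (if p \<in> X0 then insert b X0 else insert a X0)"
      by (rule grown_subdivide) (use ab dist in \<open>auto simp: P0_def\<close>)
    moreover have "(if p \<in> X0 then insert b X0 else insert a X0) = X'"
      using side dist unfolding X0_def by auto
    ultimately show ?thesis unfolding P P0_def by (simp add: insert_commute)
  qed
qed

lemma grown_add_paths:
  assumes G: "grown V E X" and pq: "{p, q} \<in> E"
  shows "\<forall>P\<in>set Ps. fresh_odd_path p q V P \<Longrightarrow> sorted_wrt (\<lambda>P Q. internal P \<inter> internal Q = {}) Ps \<Longrightarrow>
    E - {{p, q}} \<subseteq> E0 \<Longrightarrow> E0 \<subseteq> E \<Longrightarrow> (Ps = [] \<longrightarrow> E0 = E) \<Longrightarrow>
    X' \<inter> V = X \<Longrightarrow> X' \<subseteq> V \<union> \<Union>(set ` set Ps) \<Longrightarrow> \<forall>P\<in>set Ps. \<forall>e\<in>path_edges P. card (e \<inter> X') = 1 \<Longrightarrow>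
    grown (V \<union> \<Union>(set ` set Ps)) (E0 \<union> \<Union>(path_edges ` set Ps)) X'"
proof (induction Ps arbitrary: E0 X')
  case Nil
  then have "X' = X" "E0 = E" by auto
  then show ?case using G by simp
next
  case (Cons Q L)
  let ?W = "V \<union> \<Union>(set ` set L)" and ?EL = "\<Union>(path_edges ` set L)"
  txt \<open>The paths of L keep the edge pq; Q is added last and may delete it.\<close>
  have L: "grown ?W (E \<union> ?EL) (X' \<inter> ?W)"
  proof (rule Cons.IH)
    have "e \<inter> (X' \<inter> ?W) = e \<inter> X'" if "P \<in> set L" "e \<in> path_edges P" for P e
      using path_edges_subset[OF that(2)] that(1) by blast
    then show "\<forall>P\<in>set L. \<forall>e\<in>path_edges P. card (e \<inter> (X' \<inter> ?W)) = 1" using Cons.prems(8) by simp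
  qed (use Cons.prems in auto)
  have Q_fresh: "fresh_odd_path p q ?W Q"
  proof -
    have Q: "fresh_odd_path p q V Q" using Cons.prems(1) by simp
    have "internal Q \<inter> set P = {}" if "P \<in> set L" for P
    proof -
      have "fresh_odd_path p q V P" using Cons.prems(1) that by simp
      then have "set P = insert p (insert q (internal P))"
        using set_path_ends[of P] unfolding fresh_odd_path_def by simp
      moreover have "internal Q \<inter> internal P = {}" using Cons.prems(2) that by simp
      moreover have "p \<notin> internal Q" "q \<notin> internal Q"
        using ends_not_internal[of Q] Q unfolding fresh_odd_path_def by auto
      ultimately show ?thesis by auto
    qed
    then show ?thesis using Q unfolding fresh_odd_path_def by blast
  qed
  have "grown (?W \<union> set Q) ((E0 \<union> ?EL) \<union> path_edges Q) X'"
    by (rule grown_add_path[OF L _ Q_fresh _ _ refl]) (use pq Cons.prems(3,4,7,8) in auto)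
  then show ?case by (simp add: Un_ac)
qed

lemma grown_class_restriction:
  assumes G: "grown V E X" and xy: "{x, y} \<in> E" and XX': "X \<subseteq> X'"
    and alt: "\<forall>e\<in>E - {{x, y}}. card (e \<inter> X') = 1"
    and P: "fresh_odd_path x y V P" and alt_P: "\<forall>e\<in>path_edges P. card (e \<inter> X') = 1"
  shows "X' \<inter> V = X"
proof
  show "X \<subseteq> X' \<inter> V" using XX' grown_subset[OF G] by blast
  show "X' \<inter> V \<subseteq> X"
  proof
    fix z assume z: "z \<in> X' \<inter> V"
    show "z \<in> X"
    proof (rule ccontr)
      assume "z \<notin> X"
      then obtain w where w: "w \<in> X" "{w, z} \<in> E" using grown_dominating[OF G, of z] z by blast
      then have "w \<noteq> z" "w \<in> X'" using \<open>z \<notin> X\<close> XX' by auto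
      show False
      proof (cases "{w, z} = {x, y}")
        case True
        txt \<open>An odd path from x to y alternates, so its two ends lie in different classes.\<close>
        have "P \<noteq> []" using P unfolding fresh_odd_path_def by auto
        then have "hd P \<in> X' \<longleftrightarrow> last P \<notin> X'"
          using alternating_path_ends[OF _ _ _ alt_P] P unfolding fresh_odd_path_def by blast
        moreover have "x \<in> X'" "y \<in> X'" using True z \<open>w \<in> X'\<close> by (auto simp: doubleton_eq_iff)
        ultimately show False using P unfolding fresh_odd_path_def by simp
      next
        case False
        then have "card ({w, z} \<inter> X') = 1" using alt w(2) by blast
        then show False using card_doubleton_Int_eq_1[OF \<open>w \<noteq> z\<close>, of X'] \<open>w \<in> X'\<close> z by simp
      qed
    qed
  qed
qed

lemma famA_grown: "famA V E X \<Longrightarrow> grown V E X"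
proof (induction rule: famA.induct)
  case (subdiv VT ET M f)
  then show ?case by (rule tree_grown)
next
  case (odd_replace V E X x y Ps V' E' X')
  have fresh: "\<forall>P\<in>set Ps. fresh_odd_path x y V P"
    using odd_replace.hyps(5) unfolding fresh_odd_path_def by auto
  have disjoint: "sorted_wrt (\<lambda>P Q. internal P \<inter> internal Q = {}) Ps"
    using odd_replace.hyps(6) by (auto simp: sorted_wrt_iff_nth_less)
  have alt: "\<forall>P\<in>set Ps. \<forall>e\<in>path_edges P. card (e \<inter> X') = 1" using odd_replace.hyps(8,11) by auto
  obtain P where P: "P \<in> set Ps" using odd_replace.hyps(3) by (cases Ps) auto
  have "X' \<inter> V = X"
    by (rule grown_class_restriction[OF odd_replace.IH odd_replace.hyps(2,9)])
      (use odd_replace.hyps(8,11) fresh alt P in auto)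
  then have "grown (V \<union> \<Union>(set ` set Ps)) ((E - {{x, y}}) \<union> \<Union>(path_edges ` set Ps)) X'"
    by (intro grown_add_paths[OF odd_replace.IH odd_replace.hyps(2) fresh disjoint])
      (use odd_replace.hyps(3,7,10) alt in auto)
  then show ?case using odd_replace.hyps(7,8) by simp
qed

theorem proposition6p9:
  fixes V :: "'a set" and E :: "'a set set" and X :: "'a set"
  assumes "famA V E X"
  shows "mb_atomic (nbhd_hypergraph V E (V - X))"
  using grown_atomic[OF famA_grown[OF assms]] .

end
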